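(* For all integers $m\ge1$, $r\ge0$ and $n\ge0$, $$\mathcal D_{m,r}(n,x)=\sum_{k=0}^n\left(\frac12\sum_{l=0}^{n-k}\binom nl W_{m,r}(n-l,k)\,T^{[m]}_l(1)+\frac12W_{m,r}(n,k)\right)\mathcal E_k(x).$$
   Context: The Euler polynomials are defined by $\sum_{n\ge0}\mathcal E_n(x)\frac{t^n}{n!}=\frac{2e^{xt}}{e^t+1}$. For integers $m\ge1$, $n,k,r\ge0$, $W_{m,r}(n,k)$ denotes the $r$-Whitney number of the second kind, defined by $\sum_{n\ge k}W_{m,r}(n,k)\frac{z^n}{n!}=\frac{e^{rz}}{k!}\left(\frac{e^{mz}-1}{m}\right)^k$; the $r$-Dowling polynomial is $\mathcal D_{m,r}(n,u):=\sum_{k=0}^nW_{m,r}(n,k)u^k$; and the $[m]$-Touchard polynomials are $T^{[m]}_n(x):=\sum_{k=0}^n W_{m,0}(n,k)x^k$ (so $T^{[m]}_0=1$). *)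

theory Defs
  imports "HOL-Computational_Algebra.Formal_Power_Series"
begin

definition euler_poly :: "nat \<Rightarrow> real \<Rightarrow> real" where
  "euler_poly n x = fact n * fps_nth (2 * fps_exp x / (fps_exp 1 + 1)) n"

definition whitney2 :: "nat \<Rightarrow> nat \<Rightarrow> nat \<Rightarrow> nat \<Rightarrow> real" where
  "whitney2 m r n k = fact n *
     fps_nth (fps_exp (real r) * fps_const (1 / fact k) *
              (fps_const (1 / real m) * (fps_exp (real m) - 1)) ^ k) n"

definition dowling :: "nat \<Rightarrow> nat \<Rightarrow> nat \<Rightarrow> real \<Rightarrow> real" where
  "dowling m r n u = (\<Sum>k=0..n. whitney2 m r n k * u ^ k)"

definition touchard :: "nat \<Rightarrow> nat \<Rightarrow> real \<Rightarrow> real" where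
  "touchard m n x = (\<Sum>k=0..n. whitney2 m 0 n k * x ^ k)"

end

theory Submission imports Defs begin

text \<open>
  Write U = (e^(mz) - 1)/m. Then e^(rz) U^k / k! is the exponential generating function
  of W(n,k) = W_{m,r}(n,k), and e^U that of T_l(1) = T^[m]_l(1). Comparing coefficients in
  (e^t + 1) * 2e^(xt)/(e^t + 1) = 2e^(xt) gives x^j = (sum_k C(j,k) E_k(x) + E_j(x))/2;
  substituting this into the Dowling polynomial reduces the theorem to
  sum_j W(n,j) C(j,k) = sum_l C(n,l) W(n-l,k) T_l(1).
  Both sides are n! times the n-th coefficient of e^(rz) U^k e^U / k!: the right one as a
  product of exponential generating functions, the left one because sum_j C(j,k) U^j / j!
  is z^k e^z / k! with U substituted for z.
\<close>

unbundle fps_syntax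

definition whitney_base :: "nat \<Rightarrow> real fps" where
  "whitney_base m = fps_const (1 / real m) * (fps_exp (real m) - 1)"

lemma whitney_base_nth_0 [simp]: "whitney_base m $ 0 = 0"
  by (simp add: whitney_base_def)

lemma fps_mult_power_nth_eq_0:
  fixes a :: "'a::idom fps"
  assumes "a $ 0 = 0" and "n < k"
  shows "(c * a ^ k) $ n = 0"
  using assms by (simp add: fps_mult_nth startsby_zero_power_prefix)

lemma fps_mult_compose_nth:
  fixes a b c :: "'a::idom fps"
  assumes b0: "b $ 0 = 0"
  shows "(c * (a oo b)) $ n = (\<Sum>j=0..n. a $ j * (c * b ^ j) $ n)"
proof -
  have "(c * (a oo b)) $ n = (\<Sum>i=0..n. c $ i * (\<Sum>j=0..n-i. a $ j * (b ^ j) $ (n - i)))"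
    by (simp add: fps_mult_nth fps_compose_nth)
  also have "\<dots> = (\<Sum>i=0..n. c $ i * (\<Sum>j=0..n. a $ j * (b ^ j) $ (n - i)))"
  proof (rule sum.cong[OF refl])
    fix i
    have "(\<Sum>j=0..n-i. a $ j * (b ^ j) $ (n - i)) = (\<Sum>j=0..n. a $ j * (b ^ j) $ (n - i))"
      by (rule sum.mono_neutral_left) (auto simp: startsby_zero_power_prefix[OF b0])
    then show "c $ i * (\<Sum>j=0..n-i. a $ j * (b ^ j) $ (n - i))
             = c $ i * (\<Sum>j=0..n. a $ j * (b ^ j) $ (n - i))"
      by simp
  qed
  also have "\<dots> = (\<Sum>j=0..n. a $ j * (\<Sum>i=0..n. c $ i * (b ^ j) $ (n - i)))"
    unfolding sum_distrib_left mult.assoc[symmetric]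
    by (subst sum.swap) (simp only: mult_ac)
  also have "\<dots> = (\<Sum>j=0..n. a $ j * (c * b ^ j) $ n)"
    by (simp add: fps_mult_nth)
  finally show ?thesis .
qed

lemma whitney2_conv_nth:
  "whitney2 m r n k = fact n / fact k * (fps_exp (real r) * whitney_base m ^ k) $ n"
proof -
  have "fps_exp (real r) * fps_const (1 / fact k) * whitney_base m ^ k
      = fps_const (1 / fact k) * (fps_exp (real r) * whitney_base m ^ k)"
    by (simp add: algebra_simps)
  then show ?thesis
    unfolding whitney2_def whitney_base_def[symmetric]
    by (simp only: fps_mult_left_const_nth) simp
qed

lemma touchard_1_conv_nth:
  "touchard m l 1 = fact l * (fps_exp 1 oo whitney_base m) $ l"
  by (simp add: touchard_def whitney2_conv_nth fps_compose_nth sum_distrib_left)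

lemma power_conv_euler_poly:
  "2 * x ^ j = (\<Sum>k=0..j. real (j choose k) * euler_poly k x) + euler_poly j x"
proof -
  define F :: "real fps" where "F = 2 * fps_exp x / (fps_exp 1 + 1)"
  have unit: "(fps_exp 1 + 1 :: real fps) $ 0 \<noteq> 0" by simp
  have "F * (fps_exp 1 + 1) = 2 * fps_exp x"
    unfolding F_def fps_divide_unit[OF unit] using inverse_mult_eq_1[OF unit]
    by (simp add: mult.assoc)
  moreover have "(F * (fps_exp 1 + 1)) $ j = (F * fps_exp 1) $ j + F $ j"
    by (simp add: distrib_left)
  moreover have "(F * fps_exp 1) $ j = (\<Sum>k=0..j. F $ k / fact (j - k))"
    by (simp add: fps_mult_nth)
  ultimately have "2 * x ^ j / fact j = (\<Sum>k=0..j. F $ k / fact (j - k)) + F $ j"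
    by (simp add: numeral_fps_const)
  then have "2 * x ^ j = fact j * ((\<Sum>k=0..j. F $ k / fact (j - k)) + F $ j)"
    by (simp add: field_simps)
  also have "\<dots> = (\<Sum>k=0..j. real (j choose k) * euler_poly k x) + euler_poly j x"
    by (simp add: distrib_left sum_distrib_left euler_poly_def F_def binomial_fact field_simps)
  finally show ?thesis .
qed

lemma fps_nth_X_power_mult_exp:
  "(fps_const (1 / fact k) * fps_X ^ k * fps_exp (1::'a::field_char_0)) $ j
     = of_nat (j choose k) / fact j"
  unfolding mult.assoc fps_mult_left_const_nth fps_X_power_mult_nth
  by (simp add: binomial_fact)

lemma sum_binomial_whitney2_touchard_conv_nth:
  "(\<Sum>l=0..n-k. real (n choose l) * whitney2 m r (n - l) k * touchard m l 1)
     = fact n / fact k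
       * (fps_exp (real r) * whitney_base m ^ k * (fps_exp 1 oo whitney_base m)) $ n"
  (is "_ = _ * (?A * ?E) $ n")
proof -
  have "(\<Sum>l=0..n-k. real (n choose l) * whitney2 m r (n - l) k * touchard m l 1)
      = (\<Sum>l=0..n-k. fact n / fact k * (?E $ l * ?A $ (n - l)))"
    by (intro sum.cong refl)
       (simp add: whitney2_conv_nth touchard_1_conv_nth binomial_fact field_simps)
  also have "\<dots> = (\<Sum>l=0..n. fact n / fact k * (?E $ l * ?A $ (n - l)))"
    by (rule sum.mono_neutral_left) (auto simp: fps_mult_power_nth_eq_0)
  also have "\<dots> = fact n / fact k * (?A * ?E) $ n"
    by (simp add: fps_mult_nth sum_distrib_left mult.commute[of ?A])
  finally show ?thesis .
qed

lemma sum_whitney2_mult_choose_conv_nth: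
  "(\<Sum>j=0..n. whitney2 m r n j * real (j choose k))
     = fact n / fact k
       * (fps_exp (real r) * whitney_base m ^ k * (fps_exp 1 oo whitney_base m)) $ n"
proof -
  define H :: "real fps" where "H = fps_const (1 / fact k) * fps_X ^ k * fps_exp 1"
  have "(\<Sum>j=0..n. whitney2 m r n j * real (j choose k))
      = fact n * (\<Sum>j=0..n. H $ j * (fps_exp (real r) * whitney_base m ^ j) $ n)"
    unfolding H_def fps_nth_X_power_mult_exp
    by (simp add: whitney2_conv_nth sum_distrib_left mult_ac)
  also have "\<dots> = fact n * (fps_exp (real r) * (H oo whitney_base m)) $ n"
    by (simp add: fps_mult_compose_nth)
  also have "fps_exp (real r) * (H oo whitney_base m) = fps_const (1 / fact k)
      * (fps_exp (real r) * whitney_base m ^ k * (fps_exp 1 oo whitney_base m))"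
    by (simp add: H_def fps_compose_mult_distrib fps_compose_power[symmetric] mult_ac)
  finally show ?thesis
    by simp
qed

lemma sum_whitney2_mult_choose:
  "(\<Sum>j=0..n. whitney2 m r n j * real (j choose k))
     = (\<Sum>l=0..n-k. real (n choose l) * whitney2 m r (n - l) k * touchard m l 1)"
  by (simp only: sum_whitney2_mult_choose_conv_nth sum_binomial_whitney2_touchard_conv_nth)

lemma sum_mult_choose_swap:
  fixes a e :: "nat \<Rightarrow> 'a::comm_semiring_1"
  shows "(\<Sum>k=0..n. (\<Sum>j=0..n. a j * of_nat (j choose k)) * e k)
       = (\<Sum>j=0..n. a j * (\<Sum>k=0..j. of_nat (j choose k) * e k))"
proof -
  have "(\<Sum>k=0..n. (\<Sum>j=0..n. a j * of_nat (j choose k)) * e k)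
      = (\<Sum>j=0..n. a j * (\<Sum>k=0..n. of_nat (j choose k) * e k))"
    unfolding sum_distrib_left sum_distrib_right
    by (subst sum.swap) (simp add: mult.assoc)
  also have "\<dots> = (\<Sum>j=0..n. a j * (\<Sum>k=0..j. of_nat (j choose k) * e k))"
  proof (rule sum.cong[OF refl])
    fix j assume "j \<in> {0..n}"
    then have "(\<Sum>k=0..n. of_nat (j choose k) * e k) = (\<Sum>k=0..j. of_nat (j choose k) * e k)"
      by (intro sum.mono_neutral_right) (auto simp: binomial_eq_0)
    then show "a j * (\<Sum>k=0..n. of_nat (j choose k) * e k)
             = a j * (\<Sum>k=0..j. of_nat (j choose k) * e k)"
      by simp
  qed
  finally show ?thesis .
qed

theorem mainTheorem17:
  fixes m r n :: nat and x :: real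
  assumes "m \<ge> 1"
  shows "dowling m r n x =
    (\<Sum>k=0..n. ((1/2) * (\<Sum>l=0..n-k. real (n choose l) * whitney2 m r (n-l) k * touchard m l 1)
                 + (1/2) * whitney2 m r n k) * euler_poly k x)"
proof -
  let ?W = "whitney2 m r n" and ?E = "\<lambda>k. euler_poly k x"
  have "dowling m r n x
      = (\<Sum>j=0..n. ?W j * ((\<Sum>k=0..j. real (j choose k) * ?E k) + ?E j) / 2)"
    unfolding dowling_def power_conv_euler_poly[symmetric] by simp
  also have "\<dots> = (1/2) * (\<Sum>k=0..n. (\<Sum>j=0..n. ?W j * real (j choose k)) * ?E k)
                 + (1/2) * (\<Sum>k=0..n. ?W k * ?E k)"
    by (simp add: sum_mult_choose_swap sum_divide_distrib add_divide_distrib distrib_left sum.distrib)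
  also have "\<dots> = (\<Sum>k=0..n. ((1/2) * (\<Sum>l=0..n-k. real (n choose l) * whitney2 m r (n-l) k
                      * touchard m l 1) + (1/2) * ?W k) * ?E k)"
    unfolding sum_whitney2_mult_choose
    by (simp add: sum_distrib_left distrib_right sum.distrib mult.assoc flip: sum_divide_distrib)
  finally show ?thesis .
qed

end
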